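(* Let $c>0$ and let $F$ be defined by $$F(\theta)=\frac{\int_{0}^{\theta}\int_{0}^{\theta}e^{c\cos(a-b)}\,da\,db}{2\pi\int_{0}^{2\pi}e^{c\cos a}\,da}-\Big(\frac{\theta}{2\pi}\Big)^{2}.$$ Let $\theta_1,\theta_2,\theta_3\ge0$ with $\theta_1+\theta_2+\theta_3=2\pi$ and $\theta_1\ge\pi$. Then $$-3F(2\pi/3)+\sum_{i=1}^3F(\theta_i)\le-\frac{1}{\pi^2}\cdot\frac{13}{9}\cdot\frac{I_1(c)}{I_0(c)}\sum_{i=1}^3\Big(\frac{\theta_i}{2\pi}-\frac13\Big)^2.$$
   Context: $I_\alpha$ denotes the modified Bessel function of the first kind of order $\alpha\ge0$: $I_\alpha(x)=\frac{(x/2)^\alpha}{\sqrt\pi\,\Gamma(\alpha+1/2)}\int_{-1}^1e^{xt}(1-t^2)^{\alpha-1/2}\,dt$. In the paper $c=\rho rs/(1-\rho^2)$ with $0<\rho<1$, $r,s>0$, and $I_1(c)/I_0(c)=\lambda^{r,s}_{1,2}$ is the first Fourier multiplier of the spherical noise operator on the circle. *)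

theory Defs
  imports "HOL-Analysis.Analysis"
begin

text \<open>Modified Bessel function of the first kind, via the Poisson integral representation
  I_alpha(x) = (x/2)^alpha / (sqrt pi * Gamma(alpha+1/2)) * int_{-1}^{1} e^{xt} (1-t^2)^{alpha-1/2} dt.\<close>
definition besselI :: "real \<Rightarrow> real \<Rightarrow> real" where
  "besselI \<alpha> x = (x / 2) powr \<alpha> / (sqrt pi * Gamma (\<alpha> + 1/2)) *
      (LBINT t=-1..1. exp (x * t) * (1 - t\<^sup>2) powr (\<alpha> - 1/2))"

definition Fc :: "real \<Rightarrow> real \<Rightarrow> real" where
  "Fc c \<theta> = (LBINT a=0..\<theta>. (LBINT b=0..\<theta>. exp (c * cos (a - b)))) /
      (2 * pi * (LBINT a=0..2*pi. exp (c * cos a))) - (\<theta> / (2 * pi))\<^sup>2"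

end

theory Submission imports Defs begin

(* Write e(u) = exp (c cos u). By symmetry the double integral in Fc c \<theta> equals
   2 \<integral>\<^sub>0\<^sup>\<theta> (\<theta> - u) e(u) du, and for \<theta> \<ge> pi the part beyond pi folds back under
   u \<mapsto> 2 pi - u; so each Fc c \<theta>\<^sub>i is, up to explicit terms, a ramp moment
   \<integral>\<^sub>0\<^sup>pi (a - u)\<^sub>+ e(u) du. Writing also I\<^sub>1(c)/I\<^sub>0(c) = \<integral>\<^sub>0\<^sup>pi e cos / \<integral>\<^sub>0\<^sup>pi e, the claim
   becomes \<integral>\<^sub>0\<^sup>pi q e \<ge> 0 for a function q (ramps minus a multiple of cos) with
   \<integral> q = 0 and, by an elementary trigonometric inequality, \<integral> q cos \<ge> 0.
   As q is nonnegative, then decreasing, then increasing, its primitive H changes sign at most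
   once, from + to -. Integration by parts gives \<integral> q e = c \<integral> H sin e and \<integral> q cos = \<integral> H sin,
   and since e is decreasing on [0, pi], \<integral> H sin e \<ge> e(s) \<integral> H sin \<ge> 0 where s is the
   sign change of H. *)

lemma integral_reflect_shift_real:
  fixes f :: "real \<Rightarrow> real"
  shows "integral {a..b} (\<lambda>x. f (s - x)) = integral {s - b..s - a} f"
proof -
  have "integral {a..b} (\<lambda>x. f (s - x)) = integral {a - s..b - s} (\<lambda>y. f (- y))"
    using integral_shift_real_ivl[of "a - s" "- s" "b - s" "\<lambda>y. f (- y)"] by simp
  also have "\<dots> = integral {- (s - a)..- (s - b)} (\<lambda>y. f (- y))"
    by simp
  also have "\<dots> = integral {s - b..s - a} f"
    by (rule Henstock_Kurzweil_Integration.integral_reflect_real)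
  finally show ?thesis .
qed

lemma interval_integral_eq_integral_continuous:
  fixes f :: "real \<Rightarrow> real"
  assumes "a \<le> b" "continuous_on {a..b} f"
  shows "(LBINT x=a..b. f x) = integral {a..b} f"
  using assms by (intro interval_integral_eq_integral borel_integrable_atLeastAtMost')

lemma continuous_on_integral_upto:
  fixes q :: "real \<Rightarrow> real"
  shows "continuous_on {a..b} q \<Longrightarrow> continuous_on {a..b} (\<lambda>x. integral {a..x} q)"
  by (rule continuous_on_vector_derivative) (auto intro!: integral_has_vector_derivative)

lemma integral_mult_by_parts_primitive:
  fixes q f f' :: "real \<Rightarrow> real"
  assumes "a \<le> b" and q: "continuous_on {a..b} q" and f': "continuous_on {a..b} f'"
    and f: "\<And>x. x \<in> {a..b} \<Longrightarrow> (f has_real_derivative f' x) (at x within {a..b})"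
    and "integral {a..b} q = 0"
  shows "integral {a..b} (\<lambda>x. q x * f x) = - integral {a..b} (\<lambda>x. integral {a..x} q * f' x)"
proof -
  let ?H = "\<lambda>x. integral {a..x} q"
  have "((\<lambda>x. q x * f x + ?H x * f' x) has_integral ?H b * f b - ?H a * f a) {a..b}"
  proof (rule fundamental_theorem_of_calculus[OF \<open>a \<le> b\<close>])
    fix x assume x: "x \<in> {a..b}"
    have "((\<lambda>x. ?H x * f x) has_real_derivative ?H x * f' x + q x * f x) (at x within {a..b})"
      by (rule DERIV_mult'[OF integral_has_real_derivative[OF q x] f[OF x]])
    then show "((\<lambda>x. ?H x * f x) has_vector_derivative q x * f x + ?H x * f' x) (at x within {a..b})"
      by (simp add: has_real_derivative_iff_has_vector_derivative[symmetric] add.commute)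
  qed
  then have "((\<lambda>x. q x * f x + ?H x * f' x) has_integral 0) {a..b}"
    using \<open>integral {a..b} q = 0\<close> by simp
  moreover have "((\<lambda>x. ?H x * f' x) has_integral integral {a..b} (\<lambda>x. ?H x * f' x)) {a..b}"
    by (intro integrable_integral integrable_continuous_interval continuous_intros
        continuous_on_integral_upto q f')
  ultimately have "((\<lambda>x. q x * f x + ?H x * f' x - ?H x * f' x) has_integral
      0 - integral {a..b} (\<lambda>x. ?H x * f' x)) {a..b}"
    by (rule has_integral_diff)
  then show ?thesis by (simp add: integral_unique)
qed

lemma integral_nonpos:
  fixes f :: "'a::euclidean_space \<Rightarrow> real"
  assumes "f integrable_on S" and "\<And>x. x \<in> S \<Longrightarrow> f x \<le> 0"
  shows "integral S f \<le> 0"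
  using Henstock_Kurzweil_Integration.integral_nonneg[of "\<lambda>x. - f x" S] assms
  by (simp add: integrable_neg_iff)

definition single_crossing_on :: "real set \<Rightarrow> (real \<Rightarrow> real) \<Rightarrow> bool" where
  "single_crossing_on S \<phi> \<longleftrightarrow> (\<forall>x\<in>S. \<forall>y\<in>S. x \<le> y \<longrightarrow> \<phi> x < 0 \<longrightarrow> \<phi> y \<le> 0)"

lemma single_crossing_on_mult_nonneg:
  assumes "single_crossing_on S \<phi>" and "\<And>x. x \<in> S \<Longrightarrow> 0 \<le> w x"
  shows "single_crossing_on S (\<lambda>x. \<phi> x * w x)"
  using assms unfolding single_crossing_on_def
  by (metis linorder_not_le mult_nonneg_nonneg mult_nonpos_nonneg)

text \<open>With \<open>s\<close> the first point where \<open>\<phi>\<close> turns negative, \<open>\<phi> (\<rho> - \<rho> s) \<ge> 0\<close> pointwise,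
  so \<open>\<integral>\<phi>\<rho> \<ge> \<rho> s \<integral>\<phi>\<close>.\<close>
lemma integral_mult_antimono_nonneg:
  fixes \<phi> \<rho> :: "real \<Rightarrow> real"
  assumes \<phi>: "continuous_on {a..b} \<phi>" and \<rho>: "continuous_on {a..b} \<rho>"
    and cross: "single_crossing_on {a..b} \<phi>"
    and antimono: "\<And>x y. a \<le> x \<Longrightarrow> x \<le> y \<Longrightarrow> y \<le> b \<Longrightarrow> \<rho> y \<le> \<rho> x"
    and nonneg: "\<And>x. x \<in> {a..b} \<Longrightarrow> 0 \<le> \<rho> x"
    and int: "0 \<le> integral {a..b} \<phi>"
  shows "0 \<le> integral {a..b} (\<lambda>x. \<phi> x * \<rho> x)"
proof (cases "\<forall>x\<in>{a..b}. 0 \<le> \<phi> x")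
  case True
  then show ?thesis
    by (intro Henstock_Kurzweil_Integration.integral_nonneg integrable_continuous_interval
        continuous_intros \<phi> \<rho>) (simp add: nonneg)
next
  case False
  define N where "N = {x \<in> {a..b}. \<phi> x < 0}"
  have N: "N \<noteq> {}" and bdd: "bdd_below N"
    using False by (auto simp: N_def intro!: bdd_belowI[of _ a])
  define s where "s = Inf N"
  have s: "s \<in> {a..b}"
  proof -
    obtain w where w: "w \<in> N" using N by blast
    have "a \<le> s" unfolding s_def using N by (intro cInf_greatest) (auto simp: N_def)
    moreover have "s \<le> w" unfolding s_def using w bdd by (rule cInf_lower)
    ultimately show ?thesis using w by (auto simp: N_def)
  qed
  have pointwise: "0 \<le> \<phi> x * (\<rho> x - \<rho> s)" if x: "x \<in> {a..b}" for x
  proof (cases x s rule: linorder_cases)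
    case less
    then have "x \<notin> N" using cInf_lower[OF _ bdd] unfolding s_def by force
    then show ?thesis using less x s antimono by (simp add: N_def)
  next
    case greater
    then obtain w where "w \<in> N" "w < x"
      using cInf_less_iff[OF N bdd] unfolding s_def by blast
    then have "\<phi> x \<le> 0"
      using cross x unfolding single_crossing_on_def N_def by (metis less_imp_le mem_Collect_eq)
    moreover have "\<rho> x \<le> \<rho> s" using antimono s x greater by auto
    ultimately show ?thesis by (simp add: mult_nonpos_nonpos)
  qed simp
  have "\<rho> s * integral {a..b} \<phi> \<le> integral {a..b} (\<lambda>x. \<phi> x * \<rho> x)"
  proof -
    have "0 \<le> integral {a..b} (\<lambda>x. \<phi> x * (\<rho> x - \<rho> s))"
      by (intro Henstock_Kurzweil_Integration.integral_nonneg integrable_continuous_interval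
          continuous_intros \<phi> \<rho> pointwise)
    also have "\<dots> = integral {a..b} (\<lambda>x. \<phi> x * \<rho> x) - \<rho> s * integral {a..b} \<phi>"
    proof -
      have "integral {a..b} (\<lambda>x. \<phi> x * (\<rho> x - \<rho> s))
          = integral {a..b} (\<lambda>x. \<phi> x * \<rho> x - \<rho> s * \<phi> x)"
        by (simp add: algebra_simps)
      also have "\<dots> = integral {a..b} (\<lambda>x. \<phi> x * \<rho> x) - \<rho> s * integral {a..b} \<phi>"
        by (subst integral_diff) (intro integrable_continuous_interval continuous_intros \<phi> \<rho> | simp)+
      finally show ?thesis .
    qed
    finally show ?thesis by simp
  qed
  moreover have "0 \<le> \<rho> s * integral {a..b} \<phi>" using nonneg[OF s] int by simp
  ultimately show ?thesis by linarith
qed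

lemma integral_mono_pos_imp_nonneg:
  fixes q :: "real \<Rightarrow> real"
  assumes "u \<le> v" "v \<le> w" and q: "continuous_on {u..w} q"
    and mono: "\<And>x y. u \<le> x \<Longrightarrow> x \<le> y \<Longrightarrow> y \<le> w \<Longrightarrow> q x \<le> q y"
    and pos: "0 < integral {u..v} q"
  shows "0 \<le> integral {v..w} q"
proof -
  have integrable: "q integrable_on {x..y}" if "u \<le> x" "y \<le> w" for x y
    using q that by (intro integrable_continuous_interval) (auto elim: continuous_on_subset)
  have "0 < q v"
  proof (rule ccontr)
    assume "\<not> 0 < q v"
    then have "integral {u..v} q \<le> 0"
      using assms integrable mono[of _ v] by (intro integral_nonpos) force+
    with pos show False by linarith
  qed
  then show ?thesis
    using assms integrable mono[of v]
    by (intro Henstock_Kurzweil_Integration.integral_nonneg) force+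
qed

text \<open>The primitive starts out nonnegative; where \<open>q\<close> decreases it stays negative once it is,
  and where \<open>q\<close> increases a later return to positive values would keep it positive up to \<open>b\<close>,
  contradicting \<open>\<integral>\<^sub>a\<^sup>b q = 0\<close>.\<close>
lemma single_crossing_on_primitive:
  fixes q :: "real \<Rightarrow> real"
  assumes q: "continuous_on {a..b} q" and mp: "a \<le> m" "m \<le> p" "p \<le> b"
    and nonneg: "\<And>x. a \<le> x \<Longrightarrow> x \<le> m \<Longrightarrow> 0 \<le> q x"
    and antimono: "\<And>x y. m \<le> x \<Longrightarrow> x \<le> y \<Longrightarrow> y \<le> p \<Longrightarrow> q y \<le> q x"
    and mono: "\<And>x y. p \<le> x \<Longrightarrow> x \<le> y \<Longrightarrow> y \<le> b \<Longrightarrow> q x \<le> q y"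
    and total: "integral {a..b} q = 0"
  shows "single_crossing_on {a..b} (\<lambda>x. integral {a..x} q)"
proof -
  define H where "H x = integral {a..x} q" for x
  have q_on: "continuous_on {x..y} q" if "a \<le> x" "y \<le> b" for x y
    using q that by (auto elim: continuous_on_subset)
  have H_diff: "H y - H x = integral {x..y} q" if "a \<le> x" "x \<le> y" "y \<le> b" for x y
    using Henstock_Kurzweil_Integration.integral_combine[of a x y q] that
      integrable_continuous_interval[OF q_on[of a y]]
    by (simp add: H_def)
  have H_nonneg: "0 \<le> H x" if "a \<le> x" "x \<le> m" for x
    unfolding H_def using that mp q_on
    by (intro Henstock_Kurzweil_Integration.integral_nonneg integrable_continuous_interval)
      (auto intro: nonneg)
  have decreasing_part: "H y < 0" if "m \<le> x" "x \<le> y" "y \<le> p" "H x < 0" for x y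
  proof -
    have "0 < integral {m..x} (\<lambda>u. - q u)"
      using H_diff[of m x] H_nonneg[of m] that mp by simp
    then have "0 \<le> integral {x..y} (\<lambda>u. - q u)"
      using that mp antimono q_on[of m y]
      by (intro integral_mono_pos_imp_nonneg[of m x y]) (auto intro!: continuous_intros)
    then show ?thesis using H_diff[of x y] that mp by simp
  qed
  have increasing_part: "H y \<le> 0" if "p \<le> x" "x \<le> y" "y \<le> b" "H x < 0" for x y
  proof (rule ccontr)
    assume "\<not> H y \<le> 0"
    then have "0 \<le> integral {y..b} q"
      using H_diff[of x y] that mp mono q_on[of x b]
      by (intro integral_mono_pos_imp_nonneg[of x y b]) auto
    moreover have "H b = 0" using total by (simp add: H_def)
    ultimately show False using H_diff[of y b] that mp \<open>\<not> H y \<le> 0\<close> by linarith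
  qed
  have "H y \<le> 0" if "a \<le> x" "x \<le> y" "y \<le> b" "H x < 0" for x y
  proof -
    have "m < x" using H_nonneg[of x] that by force
    consider "p \<le> x" | "x < p" "y \<le> p" | "x < p" "p < y" by linarith
    then show ?thesis
    proof cases
      case 1
      then show ?thesis using increasing_part[of x y] that by blast
    next
      case 2
      then show ?thesis using decreasing_part[of x y] that \<open>m < x\<close> by force
    next
      case 3
      then have "H p < 0" using decreasing_part[of x p] that \<open>m < x\<close> by force
      then show ?thesis using increasing_part[of p y] that 3 by force
    qed
  qed
  then show ?thesis unfolding single_crossing_on_def H_def by auto
qed

lemma integral_mult_exp_cos_nonneg:
  fixes q :: "real \<Rightarrow> real"
  assumes "0 \<le> c" and q: "continuous_on {0..pi} q" and mp: "0 \<le> m" "m \<le> p" "p \<le> pi"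
    and nonneg: "\<And>x. 0 \<le> x \<Longrightarrow> x \<le> m \<Longrightarrow> 0 \<le> q x"
    and antimono: "\<And>x y. m \<le> x \<Longrightarrow> x \<le> y \<Longrightarrow> y \<le> p \<Longrightarrow> q y \<le> q x"
    and mono: "\<And>x y. p \<le> x \<Longrightarrow> x \<le> y \<Longrightarrow> y \<le> pi \<Longrightarrow> q x \<le> q y"
    and total: "integral {0..pi} q = 0"
    and cos_moment: "0 \<le> integral {0..pi} (\<lambda>x. q x * cos x)"
  shows "0 \<le> integral {0..pi} (\<lambda>x. q x * exp (c * cos x))"
proof -
  define H where "H x = integral {0..x} q" for x
  have H: "continuous_on {0..pi} H"
    unfolding H_def by (rule continuous_on_integral_upto[OF q])
  have "integral {0..pi} (\<lambda>x. q x * cos x) = - integral {0..pi} (\<lambda>x. H x * - sin x)"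
    unfolding H_def
    by (rule integral_mult_by_parts_primitive[OF _ q _ _ total])
      (auto intro!: derivative_eq_intros continuous_intros)
  then have sin_moment: "0 \<le> integral {0..pi} (\<lambda>x. H x * sin x)"
    using cos_moment by simp
  have "integral {0..pi} (\<lambda>x. q x * exp (c * cos x))
      = - integral {0..pi} (\<lambda>x. H x * (- c * (sin x * exp (c * cos x))))"
    unfolding H_def
    by (rule integral_mult_by_parts_primitive[OF _ q _ _ total])
      (auto intro!: derivative_eq_intros continuous_intros)
  also have "\<dots> = integral {0..pi} (\<lambda>x. c * (H x * sin x * exp (c * cos x)))"
    by (simp add: algebra_simps)
  also have "\<dots> = c * integral {0..pi} (\<lambda>x. H x * sin x * exp (c * cos x))"
    by (rule integral_mult_right)
  finally have by_parts:
    "integral {0..pi} (\<lambda>x. q x * exp (c * cos x))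
      = c * integral {0..pi} (\<lambda>x. H x * sin x * exp (c * cos x))" .
  have "single_crossing_on {0..pi} H"
    unfolding H_def by (rule single_crossing_on_primitive[OF q mp nonneg antimono mono total])
  then have crossing: "single_crossing_on {0..pi} (\<lambda>x. H x * sin x)"
    by (rule single_crossing_on_mult_nonneg) (simp add: sin_ge_zero)
  have weight_antimono: "exp (c * cos y) \<le> exp (c * cos x)"
    if "0 \<le> x" "x \<le> y" "y \<le> pi" for x y
    using that \<open>0 \<le> c\<close> by (simp add: mult_left_mono cos_monotone_0_pi_le)
  have "continuous_on {0..pi} (\<lambda>x. H x * sin x)" "continuous_on {0..pi} (\<lambda>x. exp (c * cos x))"
    by (intro continuous_intros H)+
  from integral_mult_antimono_nonneg[OF this crossing weight_antimono _ sin_moment]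
  have "0 \<le> integral {0..pi} (\<lambda>x. H x * sin x * exp (c * cos x))"
    by simp
  then show ?thesis using by_parts \<open>0 \<le> c\<close> by simp
qed

lemma interval_integral_substitution_minus_cos:
  fixes w v :: "real \<Rightarrow> real"
  assumes w_cont: "\<And>x. 0 < x \<Longrightarrow> x < pi \<Longrightarrow> isCont w (- cos x)"
    and w_nonneg: "\<And>t. 0 \<le> w t"
    and subst: "\<And>x. 0 < x \<Longrightarrow> x < pi \<Longrightarrow> w (- cos x) * sin x = v x"
    and v: "continuous_on {0..pi} v"
  shows "(LBINT t=-1..1. w t) = integral {0..pi} v"
proof -
  have "(LBINT t=ereal (-1)..ereal 1. w t) = (LBINT x=ereal 0..ereal pi. w (- cos x) * sin x)"
  proof (rule interval_integral_substitution_nonneg(2)[where g="\<lambda>x. - cos x" and g'=sin])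
    show "((ereal \<circ> (\<lambda>x. - cos x) \<circ> real_of_ereal) \<longlongrightarrow> ereal (-1)) (at_right (ereal 0))"
      unfolding ereal_tendsto_simps by (rule tendsto_eq_intros refl | simp)+
    show "((ereal \<circ> (\<lambda>x. - cos x) \<circ> real_of_ereal) \<longlongrightarrow> ereal 1) (at_left (ereal pi))"
      unfolding ereal_tendsto_simps by (rule tendsto_eq_intros refl | simp)+
    have "set_integrable lborel {0<..<pi} v"
      by (rule set_integrable_subset[OF borel_integrable_atLeastAtMost'[OF v]]) auto
    then show "set_integrable lborel (einterval (ereal 0) (ereal pi)) (\<lambda>x. w (- cos x) * sin x)"
      by (subst set_integrable_cong[where f'=v]) (auto simp: subst)
  qed (auto intro!: derivative_eq_intros sin_ge_zero w_cont w_nonneg)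
  also have "\<dots> = (LBINT x=ereal 0..ereal pi. v x)"
    by (rule interval_integral_cong) (auto simp: subst)
  also have "\<dots> = integral {0..pi} v"
    using interval_integral_eq_integral_continuous[OF _ v] by simp
  finally show ?thesis by (simp add: one_ereal_def)
qed

lemma besselI_0_eq_integral_exp_cos:
  assumes "c > 0"
  shows "besselI 0 c = integral {0..pi} (\<lambda>u. exp (c * cos u)) / pi"
proof -
  have "(LBINT t=-1..1. exp (c * t) * (1 - t\<^sup>2) powr (- 1/2))
      = integral {0..pi} (\<lambda>x. exp (c * cos (pi - x)))"
  proof (rule interval_integral_substitution_minus_cos)
    fix x :: real assume x: "0 < x" "x < pi"
    then have sin: "sin x > 0" by (simp add: sin_gt_zero)
    then have "0 < 1 - (- cos x)\<^sup>2" by (simp add: sin_squared_eq[symmetric])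
    then show "isCont (\<lambda>t. exp (c * t) * (1 - t\<^sup>2) powr (- 1/2)) (- cos x)"
      by (auto intro!: continuous_intros)
    have "(1 - (- cos x)\<^sup>2) powr (- 1/2) = inverse (sin x)"
      using sin by (simp add: sin_squared_eq[symmetric] powr_minus powr_half_sqrt)
    then show "exp (c * - cos x) * (1 - (- cos x)\<^sup>2) powr (- 1/2) * sin x
        = exp (c * cos (pi - x))"
      using sin by simp
  qed (auto intro!: continuous_intros)
  also have "\<dots> = integral {0..pi} (\<lambda>u. exp (c * cos u))"
    using integral_reflect_shift_real[of 0 pi "\<lambda>u. exp (c * cos u)" pi] by simp
  finally show ?thesis
    using assms by (simp add: besselI_def Gamma_one_half_real one_ereal_def)
qed

lemma Gamma_three_halves: "Gamma (3/2 :: real) = sqrt pi / 2"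
proof -
  have "(1/2 :: real) \<notin> \<int>\<^sub>\<le>\<^sub>0"
    using fraction_not_in_Ints[of 2 1, where 'a=real]
    by (intro not_in_Ints_imp_not_in_nonpos_Ints) simp
  then show ?thesis
    using Gamma_plus1[of "1/2 :: real"] by (simp add: Gamma_one_half_real)
qed

lemma integral_exp_cos_mult_cos:
  "integral {0..pi} (\<lambda>u. exp (c * cos u) * cos u)
    = c * integral {0..pi} (\<lambda>u. exp (c * cos u) * (sin u)\<^sup>2)"
proof -
  have "((\<lambda>u. exp (c * cos u) * cos u - c * (exp (c * cos u) * (sin u)\<^sup>2)) has_integral
      exp (c * cos pi) * sin pi - exp (c * cos 0) * sin 0) {0..pi}"
    by (rule fundamental_theorem_of_calculus)
      (auto intro!: derivative_eq_intros
        simp: has_real_derivative_iff_has_vector_derivative[symmetric] power2_eq_square algebra_simps)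
  then have "integral {0..pi} (\<lambda>u. exp (c * cos u) * cos u - c * (exp (c * cos u) * (sin u)\<^sup>2)) = 0"
    by (simp add: integral_unique)
  then show ?thesis
    by (subst (asm) integral_diff) (auto intro!: integrable_continuous_interval continuous_intros)
qed

lemma besselI_1_eq_integral_exp_cos:
  assumes "c > 0"
  shows "besselI 1 c = integral {0..pi} (\<lambda>u. exp (c * cos u) * cos u) / pi"
proof -
  have "(LBINT t=-1..1. exp (c * t) * (1 - t\<^sup>2) powr (1/2))
      = integral {0..pi} (\<lambda>x. exp (c * cos (pi - x)) * (sin (pi - x))\<^sup>2)"
  proof (rule interval_integral_substitution_minus_cos)
    fix x :: real assume x: "0 < x" "x < pi"
    then have sin: "sin x > 0" by (simp add: sin_gt_zero)
    then have "0 < 1 - (- cos x)\<^sup>2" by (simp add: sin_squared_eq[symmetric])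
    then show "isCont (\<lambda>t. exp (c * t) * (1 - t\<^sup>2) powr (1/2)) (- cos x)"
      by (auto intro!: continuous_intros)
    have "(1 - (- cos x)\<^sup>2) powr (1/2) = sin x"
      using sin by (simp add: sin_squared_eq[symmetric] powr_half_sqrt)
    then show "exp (c * - cos x) * (1 - (- cos x)\<^sup>2) powr (1/2) * sin x
        = exp (c * cos (pi - x)) * (sin (pi - x))\<^sup>2"
      by (simp add: power2_eq_square)
  qed (auto intro!: continuous_intros)
  also have "\<dots> = integral {0..pi} (\<lambda>u. exp (c * cos u) * (sin u)\<^sup>2)"
    using integral_reflect_shift_real[of 0 pi "\<lambda>u. exp (c * cos u) * (sin u)\<^sup>2" pi] by simp
  finally show ?thesis
    using assms integral_exp_cos_mult_cos[of c]
    by (simp add: besselI_def Gamma_three_halves one_ereal_def field_simps)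
qed

lemma besselI_ratio_eq_integral_ratio:
  assumes "c > 0"
  shows "besselI 1 c / besselI 0 c
    = integral {0..pi} (\<lambda>u. exp (c * cos u) * cos u) / integral {0..pi} (\<lambda>u. exp (c * cos u))"
  using assms by (simp add: besselI_0_eq_integral_exp_cos besselI_1_eq_integral_exp_cos)

lemma integral_primitive_eq_moment:
  fixes g :: "real \<Rightarrow> real"
  assumes "a \<le> t" and g: "continuous_on {a..t} g"
  shows "integral {a..t} (\<lambda>x. integral {a..x} g) = integral {a..t} (\<lambda>u. (t - u) * g u)"
proof -
  let ?E = "\<lambda>x. integral {a..x} g"
  have "((\<lambda>u. (t - u) * g u - ?E u) has_integral (t - t) * ?E t - (t - a) * ?E a) {a..t}"
  proof (rule fundamental_theorem_of_calculus[OF \<open>a \<le> t\<close>])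
    fix x assume x: "x \<in> {a..t}"
    have "((\<lambda>u. (t - u) * ?E u) has_real_derivative (t - x) * g x + (0 - 1) * ?E x)
        (at x within {a..t})"
      by (intro DERIV_mult' DERIV_diff DERIV_const DERIV_ident integral_has_real_derivative[OF g x])
    then show "((\<lambda>u. (t - u) * ?E u) has_vector_derivative (t - x) * g x - ?E x) (at x within {a..t})"
      by (simp add: has_real_derivative_iff_has_vector_derivative[symmetric])
  qed
  then have zero: "((\<lambda>u. (t - u) * g u - ?E u) has_integral 0) {a..t}"
    by simp
  have "((\<lambda>u. (t - u) * g u - ?E u) has_integral
      integral {a..t} (\<lambda>u. (t - u) * g u) - integral {a..t} ?E) {a..t}"
    by (intro has_integral_diff integrable_integral integrable_continuous_interval
        continuous_on_integral_upto[OF g] continuous_on_mult[OF _ g] continuous_on_diff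
        continuous_on_const continuous_on_id)
  from has_integral_unique[OF zero this] show ?thesis
    by simp
qed

lemma integral_even_shift:
  fixes f :: "real \<Rightarrow> real"
  assumes f: "continuous_on UNIV f" and even: "\<And>x. f (- x) = f x" and "0 \<le> a" "a \<le> t"
  shows "integral {0..t} (\<lambda>b. f (a - b)) = integral {0..a} f + integral {0..t - a} f"
proof -
  have "integral {0..t} (\<lambda>b. f (a - b))
      = integral {0..a} (\<lambda>b. f (a - b)) + integral {a..t} (\<lambda>b. f (a - b))"
    using assms
    by (intro Henstock_Kurzweil_Integration.integral_combine[symmetric] integrable_continuous_interval
        continuous_on_compose2[OF f]) (auto intro!: continuous_intros)
  also have "integral {0..a} (\<lambda>b. f (a - b)) = integral {0..a} f"
    using integral_reflect_shift_real[of 0 a f a] by simp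
  also have "integral {a..t} (\<lambda>b. f (a - b)) = integral {- (t - a)..- 0} (\<lambda>x. f (- x))"
    using integral_reflect_shift_real[of a t f a] by (simp add: even)
  also have "\<dots> = integral {0..t - a} f"
    by (rule Henstock_Kurzweil_Integration.integral_reflect_real)
  finally show ?thesis .
qed

lemma double_integral_exp_cos_diff:
  assumes "0 \<le> t"
  shows "(LBINT a=0..t. (LBINT b=0..t. exp (c * cos (a - b))))
    = 2 * integral {0..t} (\<lambda>u. (t - u) * exp (c * cos u))"
proof -
  define E where "E x = integral {0..x} (\<lambda>u. exp (c * cos u))" for x
  have E: "continuous_on {0..t} E"
    unfolding E_def by (intro continuous_on_integral_upto continuous_intros)
  have E_reflected: "continuous_on {0..t} (\<lambda>a. E (t - a))"
    by (rule continuous_on_compose2[OF E]) (auto intro!: continuous_intros)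
  have "(LBINT a=0..t. (LBINT b=0..t. exp (c * cos (a - b)))) = (LBINT a=0..t. E a + E (t - a))"
  proof (rule interval_integral_cong)
    fix a assume "a \<in> einterval (min 0 (ereal t)) (max 0 (ereal t))"
    then have "0 \<le> a" "a \<le> t"
      using assms by (auto simp: min_def max_def zero_ereal_def split: if_splits)
    then show "(LBINT b=0..t. exp (c * cos (a - b))) = E a + E (t - a)"
      unfolding E_def zero_ereal_def using assms
      by (subst interval_integral_eq_integral_continuous)
        (auto intro!: continuous_intros integral_even_shift)
  qed
  also have "\<dots> = integral {0..t} (\<lambda>a. E a + E (t - a))"
    unfolding zero_ereal_def
    by (rule interval_integral_eq_integral_continuous[OF assms]) (intro continuous_intros E E_reflected)
  also have "\<dots> = 2 * integral {0..t} E"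
    using integral_reflect_shift_real[of 0 t E t] E E_reflected
    by (subst integral_add) (auto intro: integrable_continuous_interval)
  finally show ?thesis
    unfolding E_def using assms
    by (simp add: integral_primitive_eq_moment continuous_intros)
qed

lemma interval_integral_exp_cos_period:
  "(LBINT a=0..2*pi. exp (c * cos a)) = 2 * integral {0..pi} (\<lambda>u. exp (c * cos u))"
proof -
  have integrable: "(\<lambda>u. exp (c * cos u)) integrable_on {0..2*pi}"
    by (intro integrable_continuous_interval continuous_intros)
  have "(LBINT a=0..2*pi. exp (c * cos a)) = integral {0..2*pi} (\<lambda>u. exp (c * cos u))"
    unfolding zero_ereal_def
    by (rule interval_integral_eq_integral_continuous) (auto intro!: continuous_intros)
  also have "\<dots> = integral {0..pi} (\<lambda>u. exp (c * cos u)) + integral {pi..2*pi} (\<lambda>u. exp (c * cos u))"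
    using integrable by (intro Henstock_Kurzweil_Integration.integral_combine[symmetric]) auto
  also have "integral {pi..2*pi} (\<lambda>u. exp (c * cos u)) = integral {0..pi} (\<lambda>u. exp (c * cos u))"
    using integral_reflect_shift_real[of 0 pi "\<lambda>u. exp (c * cos u)" "2*pi"] by simp
  finally show ?thesis by simp
qed

lemma integral_exp_cos_pos: "0 < integral {0..pi} (\<lambda>u. exp (c * cos u))"
proof -
  have "exp (- \<bar>c\<bar>) \<le> exp (c * cos u)" for u
  proof -
    have "\<bar>c * cos u\<bar> \<le> \<bar>c\<bar>" by (simp add: abs_mult mult_left_le)
    then show ?thesis by simp
  qed
  then have "integral {0..pi} (\<lambda>u. exp (- \<bar>c\<bar>)) \<le> integral {0..pi} (\<lambda>u. exp (c * cos u))"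
    by (intro integral_le integrable_continuous_interval continuous_intros)
  moreover have "0 < integral {0..pi} (\<lambda>u. exp (- \<bar>c\<bar>))" by simp
  ultimately show ?thesis by linarith
qed

lemma Fc_eq_moment:
  assumes "0 \<le> t"
  shows "Fc c t = integral {0..t} (\<lambda>u. (t - u) * exp (c * cos u))
      / (2 * pi * integral {0..pi} (\<lambda>u. exp (c * cos u))) - (t / (2 * pi))\<^sup>2"
  using assms
  by (simp add: Fc_def double_integral_exp_cos_diff interval_integral_exp_cos_period)

lemma has_integral_ramp_down_mult:
  fixes h :: "real \<Rightarrow> real"
  assumes "a \<le> t" "t \<le> b" and h: "((\<lambda>u. (t - u) * h u) has_integral I) {a..t}"
  shows "((\<lambda>u. max (t - u) 0 * h u) has_integral I) {a..b}"
proof -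
  have "((\<lambda>u. max (t - u) 0 * h u) has_integral I) {a..t}"
    using h by (rule has_integral_eq[rotated]) auto
  moreover have "((\<lambda>u. max (t - u) 0 * h u) has_integral 0) {t..b}"
    by (rule has_integral_eq[where f="\<lambda>_. 0"]) auto
  ultimately show ?thesis
    using has_integral_combine[OF assms(1,2)] by fastforce
qed

lemma has_integral_ramp_up_mult:
  fixes h :: "real \<Rightarrow> real"
  assumes "a \<le> t" "t \<le> b" and h: "((\<lambda>u. (u - t) * h u) has_integral I) {t..b}"
  shows "((\<lambda>u. max (u - t) 0 * h u) has_integral I) {a..b}"
proof -
  have "((\<lambda>u. max (u - t) 0 * h u) has_integral 0) {a..t}"
    by (rule has_integral_eq[where f="\<lambda>_. 0"]) auto
  moreover have "((\<lambda>u. max (u - t) 0 * h u) has_integral I) {t..b}"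
    using h by (rule has_integral_eq[rotated]) auto
  ultimately show ?thesis
    using has_integral_combine[OF assms(1,2)] by fastforce
qed

definition ramp_moment :: "real \<Rightarrow> real \<Rightarrow> real" where
  "ramp_moment c t = integral {0..pi} (\<lambda>u. max (t - u) 0 * exp (c * cos u))"

lemma moment_eq_ramp_moment:
  assumes "0 \<le> t" "t \<le> pi"
  shows "integral {0..t} (\<lambda>u. (t - u) * exp (c * cos u)) = ramp_moment c t"
proof -
  have "((\<lambda>u. (t - u) * exp (c * cos u)) has_integral
      integral {0..t} (\<lambda>u. (t - u) * exp (c * cos u))) {0..t}"
    by (intro integrable_integral integrable_continuous_interval continuous_intros)
  from has_integral_ramp_down_mult[OF assms this] show ?thesis
    unfolding ramp_moment_def by (simp add: integral_unique)
qed

lemma moment_eq_ramp_moment_reflected: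
  assumes "pi \<le> t" "t \<le> 2 * pi"
  shows "integral {0..t} (\<lambda>u. (t - u) * exp (c * cos u))
    = 2 * (t - pi) * integral {0..pi} (\<lambda>u. exp (c * cos u)) + ramp_moment c (2 * pi - t)"
proof -
  let ?e = "\<lambda>u. exp (c * cos u)"
  define r where "r = 2 * pi - t"
  have r: "0 \<le> r" "r \<le> pi" using assms by (auto simp: r_def)
  have "integral {0..t} (\<lambda>u. (t - u) * ?e u)
      = integral {0..pi} (\<lambda>u. (t - u) * ?e u) + integral {pi..t} (\<lambda>u. (t - u) * ?e u)"
    using assms
    by (intro Henstock_Kurzweil_Integration.integral_combine[symmetric]
        integrable_continuous_interval continuous_intros) auto
  also have "integral {pi..t} (\<lambda>u. (t - u) * ?e u) = integral {r..pi} (\<lambda>v. (v - r) * ?e v)"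
    using integral_reflect_shift_real[of r pi "\<lambda>u. (t - u) * ?e u" "2 * pi"]
    by (simp add: r_def cos_diff algebra_simps)
  also have "\<dots> = integral {0..pi} (\<lambda>v. max (v - r) 0 * ?e v)"
  proof -
    have "((\<lambda>v. (v - r) * ?e v) has_integral integral {r..pi} (\<lambda>v. (v - r) * ?e v)) {r..pi}"
      by (intro integrable_integral integrable_continuous_interval continuous_intros)
    from has_integral_ramp_up_mult[OF r this] show ?thesis
      by (simp add: integral_unique)
  qed
  also have "integral {0..pi} (\<lambda>u. (t - u) * ?e u) + \<dots>
      = integral {0..pi} (\<lambda>u. (t - u) * ?e u + max (u - r) 0 * ?e u)"
    by (rule integral_add[symmetric]) (intro integrable_continuous_interval continuous_intros)+
  also have "\<dots> = integral {0..pi} (\<lambda>u. 2 * (t - pi) * ?e u + max (r - u) 0 * ?e u)"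
  proof -
    have "(t - u) + max (u - r) 0 = 2 * (t - pi) + max (r - u) 0" for u
      by (simp add: r_def max_def)
    then have "(t - u) * ?e u + max (u - r) 0 * ?e u = 2 * (t - pi) * ?e u + max (r - u) 0 * ?e u"
      for u by (metis distrib_right)
    then show ?thesis by simp
  qed
  also have "\<dots> = 2 * (t - pi) * integral {0..pi} ?e + ramp_moment c r"
    unfolding ramp_moment_def
    by (subst integral_add) (auto intro!: integrable_continuous_interval continuous_intros)
  finally show ?thesis by (simp add: r_def)
qed

lemma Fc_eq_ramp_moment:
  assumes "0 \<le> \<theta>" "\<theta> \<le> pi"
  shows "Fc c \<theta> = ramp_moment c \<theta> / (2 * pi * integral {0..pi} (\<lambda>u. exp (c * cos u)))
    - (\<theta> / (2 * pi))\<^sup>2"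
  using assms by (simp add: Fc_eq_moment moment_eq_ramp_moment)

lemma Fc_eq_ramp_moment_reflected:
  assumes "pi \<le> \<theta>" "\<theta> \<le> 2 * pi"
  shows "Fc c \<theta> = (2 * (\<theta> - pi) * integral {0..pi} (\<lambda>u. exp (c * cos u)) + ramp_moment c (2 * pi - \<theta>))
      / (2 * pi * integral {0..pi} (\<lambda>u. exp (c * cos u))) - (\<theta> / (2 * pi))\<^sup>2"
  using assms by (simp add: Fc_eq_moment moment_eq_ramp_moment_reflected)

definition angle_dispersion :: "real \<Rightarrow> real \<Rightarrow> real \<Rightarrow> real" where
  "angle_dispersion \<theta>1 \<theta>2 \<theta>3 =
    (\<theta>1 / (2 * pi) - 1/3)\<^sup>2 + (\<theta>2 / (2 * pi) - 1/3)\<^sup>2 + (\<theta>3 / (2 * pi) - 1/3)\<^sup>2"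

lemma angle_dispersion_le:
  assumes "0 \<le> \<theta>1" "0 \<le> \<theta>2" "0 \<le> \<theta>3" "\<theta>1 + \<theta>2 + \<theta>3 = 2 * pi"
  shows "angle_dispersion \<theta>1 \<theta>2 \<theta>3 \<le> 2/3"
proof -
  define x where "x \<theta> = \<theta> / (2 * pi)" for \<theta>
  have sum: "x \<theta>1 + x \<theta>2 + x \<theta>3 = 1"
    using assms(4) by (simp add: x_def field_simps)
  have sq_le: "(x \<theta>)\<^sup>2 \<le> x \<theta>" if "0 \<le> \<theta>" "\<theta> \<le> 2 * pi" for \<theta>
  proof -
    have "0 \<le> x \<theta>" "x \<theta> \<le> 1" using that by (simp_all add: x_def)
    then show ?thesis by (simp add: power2_eq_square mult_left_le)
  qed
  have "angle_dispersion \<theta>1 \<theta>2 \<theta>3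
      = (x \<theta>1)\<^sup>2 + (x \<theta>2)\<^sup>2 + (x \<theta>3)\<^sup>2 - 2/3 * x \<theta>1 - 2/3 * x \<theta>2 - 2/3 * x \<theta>3 + 1/3"
    unfolding angle_dispersion_def x_def[symmetric] by (simp add: power2_eq_square algebra_simps)
  moreover have "(x \<theta>1)\<^sup>2 \<le> x \<theta>1" "(x \<theta>2)\<^sup>2 \<le> x \<theta>2" "(x \<theta>3)\<^sup>2 \<le> x \<theta>3"
    using assms by (intro sq_le; linarith)+
  ultimately show ?thesis
    using sum by linarith
qed

lemma cos_sum_ge_cos_half_sum_sq:
  fixes s t :: real
  assumes "0 \<le> s" "0 \<le> t" "s + t \<le> pi"
  shows "1/2 + 4 * (cos ((s + t) / 2))\<^sup>2 \<le> 3/2 + cos (s + t) + cos s + cos t"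
proof -
  define C where "C = cos ((s + t) / 2)"
  define D where "D = cos ((s - t) / 2)"
  have "0 \<le> C" unfolding C_def using assms by (intro cos_ge_zero) auto
  moreover have "C \<le> D"
  proof -
    have "cos ((s + t) / 2) \<le> cos (\<bar>s - t\<bar> / 2)"
      using assms by (intro cos_monotone_0_pi_le) (auto simp: abs_if)
    moreover have "cos (\<bar>s - t\<bar> / 2) = cos ((s - t) / 2)"
      by (metis abs_divide abs_numeral cos_abs_real)
    ultimately show ?thesis by (simp add: C_def D_def)
  qed
  ultimately have "2 * C\<^sup>2 \<le> 2 * C * D"
    by (simp add: power2_eq_square mult_left_mono)
  moreover have "cos s + cos t = 2 * C * D"
    by (simp add: C_def D_def cos_plus_cos)
  moreover have "cos (s + t) = 2 * C\<^sup>2 - 1"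
  proof -
    have "s + t = 2 * ((s + t) / 2)" by simp
    then show ?thesis unfolding C_def by (metis cos_double_cos)
  qed
  ultimately show ?thesis
    unfolding C_def by linarith
qed

lemma angle_dispersion_le_cos_sum:
  fixes s t :: real
  assumes "0 \<le> s" "0 \<le> t" "s + t \<le> pi"
  shows "13/9 * angle_dispersion (2 * pi - (s + t)) s t \<le> 3/2 + cos (s + t) + cos s + cos t"
proof -
  define r where "r = s + t"
  define X where "X = (4 * pi / 3 - r)\<^sup>2"
  define Y where "Y = (s - t)\<^sup>2"
  define P where "P = pi\<^sup>2"
  have r: "0 \<le> r" "r \<le> pi" using assms by (auto simp: r_def)
  have "0 < P" by (simp add: P_def)
  have "Y \<le> r\<^sup>2"
    using assms unfolding Y_def r_def abs_le_square_iff[symmetric] by auto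
  have bound: "13/9 * angle_dispersion (2 * pi - r) s t \<le> K"
    if "39 * X + 13 * Y \<le> 72 * K * P" for K
  proof -
    have "13/9 * angle_dispersion (2 * pi - r) s t = (39 * X + 13 * Y) / (72 * P)"
      by (simp add: angle_dispersion_def r_def X_def Y_def P_def field_simps power2_eq_square)
    also have "\<dots> \<le> 72 * K * P / (72 * P)"
      using that \<open>0 < P\<close> by (intro divide_right_mono) auto
    finally show ?thesis using \<open>0 < P\<close> by simp
  qed
  have sq: "(4 * pi / 3)\<^sup>2 = 16/9 * P" "(2 * pi / 3)\<^sup>2 = 4/9 * P"
    by (simp_all add: P_def power_divide power_mult_distrib)
  show ?thesis
  proof (cases "r \<le> 2 * pi / 3")
    case True
    have "X \<le> (4 * pi / 3)\<^sup>2" "r\<^sup>2 \<le> (2 * pi / 3)\<^sup>2"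
      unfolding X_def using True r by (intro power_mono; simp)+
    then have "13/9 * angle_dispersion (2 * pi - r) s t \<le> 3/2"
      using \<open>Y \<le> r\<^sup>2\<close> \<open>0 < P\<close> unfolding sq by (intro bound) linarith
    moreover have "cos (pi / 3) \<le> cos (r / 2)"
      using True r by (intro cos_monotone_0_pi_le) auto
    then have "(1/2)\<^sup>2 \<le> (cos (r / 2))\<^sup>2"
      by (intro power_mono) (simp_all add: cos_60)
    then have "1/4 \<le> (cos (r / 2))\<^sup>2"
      by (simp add: power2_eq_square)
    ultimately show ?thesis
      using cos_sum_ge_cos_half_sum_sq[OF assms] unfolding r_def by linarith
  next
    case False
    have "X \<le> (2 * pi / 3)\<^sup>2" "r\<^sup>2 \<le> P"
      unfolding X_def P_def using False r by (intro power_mono; simp)+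
    then have "13/9 * angle_dispersion (2 * pi - r) s t \<le> 1/2"
      using \<open>Y \<le> r\<^sup>2\<close> \<open>0 < P\<close> unfolding sq by (intro bound) linarith
    then show ?thesis
      using cos_sum_ge_cos_half_sum_sq[OF assms] zero_le_power2[of "cos (r / 2)"]
      unfolding r_def by linarith
  qed
qed

lemma has_integral_ramp_mult:
  fixes f F :: "real \<Rightarrow> real"
  assumes "0 \<le> a" "a \<le> b"
    and F: "\<And>x. x \<in> {0..a} \<Longrightarrow> (F has_real_derivative (a - x) * f x) (at x within {0..a})"
  shows "((\<lambda>u. max (a - u) 0 * f u) has_integral F a - F 0) {0..b}"
proof -
  have "((\<lambda>u. (a - u) * f u) has_integral F a - F 0) {0..a}"
    using \<open>0 \<le> a\<close> F
    by (intro fundamental_theorem_of_calculus)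
      (auto simp: has_real_derivative_iff_has_vector_derivative[symmetric])
  then show ?thesis
    by (rule has_integral_ramp_down_mult[OF assms(1,2)])
qed

lemma has_integral_ramp:
  fixes a b :: real
  assumes "0 \<le> a" "a \<le> b"
  shows "((\<lambda>u. max (a - u) 0) has_integral a\<^sup>2 / 2) {0..b}"
proof -
  have "((\<lambda>u. max (a - u) 0 * 1) has_integral (a * a - a\<^sup>2 / 2) - (a * 0 - 0\<^sup>2 / 2)) {0..b}"
    using assms
    by (intro has_integral_ramp_mult) (auto intro!: derivative_eq_intros simp: power2_eq_square)
  then show ?thesis by (simp add: power2_eq_square)
qed

lemma has_integral_ramp_cos:
  fixes a b :: real
  assumes "0 \<le> a" "a \<le> b"
  shows "((\<lambda>u. max (a - u) 0 * cos u) has_integral 1 - cos a) {0..b}"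
proof -
  have "((\<lambda>u. max (a - u) 0 * cos u) has_integral
      ((a - a) * sin a - cos a) - ((a - 0) * sin 0 - cos 0)) {0..b}"
    using assms
    by (intro has_integral_ramp_mult) (auto intro!: derivative_eq_intros simp: algebra_simps)
  then show ?thesis by simp
qed

lemma has_integral_cos_0_pi: "(cos has_integral 0) {0..pi}"
proof -
  have "(cos has_integral sin pi - sin 0) {0..pi}"
    by (rule fundamental_theorem_of_calculus)
      (auto intro!: derivative_eq_intros simp: has_real_derivative_iff_has_vector_derivative[symmetric])
  then show ?thesis by simp
qed

lemma has_integral_cos_sq_0_pi: "((\<lambda>u. cos u * cos u) has_integral pi / 2) {0..pi}"
proof -
  have "((\<lambda>u. cos u * cos u) has_integral
      (pi + sin pi * cos pi) / 2 - (0 + sin 0 * cos 0) / 2) {0..pi}"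
  proof (rule fundamental_theorem_of_calculus)
    fix x :: real
    have "((\<lambda>u. (u + sin u * cos u) / 2) has_real_derivative
        (1 + (cos x * cos x - sin x * sin x)) / 2) (at x within {0..pi})"
      by (auto intro!: derivative_eq_intros)
    moreover have "(1 + (cos x * cos x - sin x * sin x)) / 2 = cos x * cos x"
      using sin_cos_squared_add[of x] by (simp add: power2_eq_square algebra_simps)
    ultimately show "((\<lambda>u. (u + sin u * cos u) / 2) has_vector_derivative cos x * cos x)
        (at x within {0..pi})"
      by (simp add: has_real_derivative_iff_has_vector_derivative)
  qed simp
  then show ?thesis by simp
qed

text \<open>Integrated against \<open>exp (c * cos u)\<close>, this function produces the combination of ramp
  moments through which the values \<open>Fc c \<theta>\<^sub>i\<close> enter; \<open>B\<close> and \<open>k\<close> will be chosen to make its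
  integral vanish and its cosine moment nonnegative.\<close>
definition ramp_combination :: "real \<Rightarrow> real \<Rightarrow> real \<Rightarrow> real \<Rightarrow> real \<Rightarrow> real" where
  "ramp_combination B k s t u =
    B - k * cos u + 3 * max (2 * pi / 3 - u) 0 - max (s + t - u) 0 - max (s - u) 0 - max (t - u) 0"

lemma continuous_on_ramp_combination: "continuous_on S (ramp_combination B k s t)"
  unfolding ramp_combination_def by (intro continuous_intros)

lemma integral_ramp_combination:
  assumes "0 \<le> s" "0 \<le> t" "s + t \<le> pi"
  shows "integral {0..pi} (ramp_combination B k s t)
    = B * pi + 2 * pi\<^sup>2 / 3 - ((s + t)\<^sup>2 + s\<^sup>2 + t\<^sup>2) / 2"
proof -
  have "((\<lambda>u. B) has_integral B * pi) {0..pi}"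
    using has_integral_const_real[of B 0 pi] by (simp add: mult.commute)
  then have "(ramp_combination B k s t has_integral
      B * pi - k * 0 + 3 * ((2 * pi / 3)\<^sup>2 / 2) - (s + t)\<^sup>2 / 2 - s\<^sup>2 / 2 - t\<^sup>2 / 2) {0..pi}"
    unfolding ramp_combination_def using assms
    by (intro has_integral_diff has_integral_add has_integral_mult_right has_integral_ramp
        has_integral_cos_0_pi) auto
  then show ?thesis
    by (simp add: integral_unique power2_eq_square field_simps)
qed

lemma integral_ramp_combination_cos:
  assumes "0 \<le> s" "0 \<le> t" "s + t \<le> pi"
  shows "integral {0..pi} (\<lambda>u. ramp_combination B k s t u * cos u)
    = 3/2 + cos (s + t) + cos s + cos t - k * pi / 2"
proof -
  have "((\<lambda>u. B * cos u - k * (cos u * cos u) + 3 * (max (2 * pi / 3 - u) 0 * cos u)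
      - max (s + t - u) 0 * cos u - max (s - u) 0 * cos u - max (t - u) 0 * cos u) has_integral
      B * 0 - k * (pi / 2) + 3 * (1 - cos (2 * pi / 3))
      - (1 - cos (s + t)) - (1 - cos s) - (1 - cos t)) {0..pi}"
    using assms
    by (intro has_integral_diff has_integral_add has_integral_mult_right has_integral_ramp_cos
        has_integral_cos_0_pi has_integral_cos_sq_0_pi) auto
  moreover have "(\<lambda>u. ramp_combination B k s t u * cos u) = (\<lambda>u. B * cos u - k * (cos u * cos u)
      + 3 * (max (2 * pi / 3 - u) 0 * cos u) - max (s + t - u) 0 * cos u
      - max (s - u) 0 * cos u - max (t - u) 0 * cos u)"
    by (simp add: fun_eq_iff ramp_combination_def algebra_simps)
  ultimately show ?thesis
    by (simp add: integral_unique cos_120)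
qed

lemma integral_ramp_combination_exp_cos:
  "integral {0..pi} (\<lambda>u. ramp_combination B k s t u * exp (c * cos u))
    = B * integral {0..pi} (\<lambda>u. exp (c * cos u)) - k * integral {0..pi} (\<lambda>u. exp (c * cos u) * cos u)
      + 3 * ramp_moment c (2 * pi / 3) - ramp_moment c (s + t) - ramp_moment c s - ramp_moment c t"
proof -
  let ?e = "\<lambda>u. exp (c * cos u)"
  have "((\<lambda>u. B * ?e u - k * (?e u * cos u) + 3 * (max (2 * pi / 3 - u) 0 * ?e u)
      - max (s + t - u) 0 * ?e u - max (s - u) 0 * ?e u - max (t - u) 0 * ?e u) has_integral
      B * integral {0..pi} ?e - k * integral {0..pi} (\<lambda>u. ?e u * cos u)
      + 3 * ramp_moment c (2 * pi / 3) - ramp_moment c (s + t) - ramp_moment c s - ramp_moment c t)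
      {0..pi}"
    unfolding ramp_moment_def
    by (intro has_integral_diff has_integral_add has_integral_mult_right integrable_integral
        integrable_continuous_interval continuous_intros)
  moreover have "(\<lambda>u. ramp_combination B k s t u * ?e u) = (\<lambda>u. B * ?e u - k * (?e u * cos u)
      + 3 * (max (2 * pi / 3 - u) 0 * ?e u) - max (s + t - u) 0 * ?e u
      - max (s - u) 0 * ?e u - max (t - u) 0 * ?e u)"
    by (simp add: fun_eq_iff ramp_combination_def algebra_simps)
  ultimately show ?thesis
    by (simp add: integral_unique)
qed

lemma cos_diff_le: "x \<le> y \<Longrightarrow> cos x - cos y \<le> y - (x :: real)"
proof -
  assume "x \<le> y"
  have "\<bar>sin ((x + y) / 2) * sin ((y - x) / 2)\<bar> \<le> 1 * \<bar>(y - x) / 2\<bar>"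
    unfolding abs_mult by (intro mult_mono abs_sin_le_one abs_sin_x_le_abs_x) auto
  then show ?thesis
    using cos_diff_cos[of x y] abs_ge_self[of "sin ((x + y) / 2) * sin ((y - x) / 2)"] \<open>x \<le> y\<close>
    by simp
qed

lemma ramp_combination_nonneg:
  assumes "0 \<le> k" "k \<le> B + 2 * pi - 2 * (s + t)"
    and "0 \<le> u" "u \<le> s" "u \<le> t" "u \<le> 2 * pi / 3"
  shows "0 \<le> ramp_combination B k s t u"
proof -
  have "ramp_combination B k s t u = B + 2 * pi - 2 * (s + t) - k * cos u"
    using assms by (simp add: ramp_combination_def max_def)
  moreover have "k * cos u \<le> k" using \<open>0 \<le> k\<close> by (simp add: mult_left_le)
  ultimately show ?thesis using assms by linarith
qed

lemma ramp_combination_antimono: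
  assumes "0 \<le> k" "k \<le> 1" "min s t \<le> x" "x \<le> y" "y \<le> 2 * pi / 3"
  shows "ramp_combination B k s t y \<le> ramp_combination B k s t x"
proof -
  have "k * (cos x - cos y) \<le> k * (y - x)"
    using cos_diff_le[OF \<open>x \<le> y\<close>] \<open>0 \<le> k\<close> by (rule mult_left_mono)
  also have "\<dots> \<le> y - x"
    using \<open>k \<le> 1\<close> \<open>0 \<le> k\<close> \<open>x \<le> y\<close> by (simp add: mult_left_le_one_le)
  finally have "k * cos x - k * cos y \<le> y - x" by (simp add: right_diff_distrib)
  moreover have "max (a - x) 0 - max (a - y) 0 \<le> y - x" for a :: real
    using \<open>x \<le> y\<close> by (simp add: max_def)
  moreover have "max (2 * pi / 3 - x) 0 - max (2 * pi / 3 - y) 0 = y - x"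
    using assms by (simp add: max_def)
  moreover have "max (s - x) 0 - max (s - y) 0 = 0 \<or> max (t - x) 0 - max (t - y) (0 :: real) = 0"
    using assms by (auto simp: max_def min_def split: if_splits)
  ultimately show ?thesis
    unfolding ramp_combination_def by (smt (verit))
qed

lemma ramp_combination_mono:
  assumes "0 \<le> k" "2 * pi / 3 \<le> x" "x \<le> y" "y \<le> pi"
  shows "ramp_combination B k s t x \<le> ramp_combination B k s t y"
proof -
  have "k * cos y \<le> k * cos x"
    using assms by (intro mult_left_mono cos_monotone_0_pi_le) auto
  moreover have "max (a - y) 0 \<le> max (a - x) (0 :: real)" for a
    using \<open>x \<le> y\<close> by (simp add: max_def)
  moreover have "max (2 * pi / 3 - x) 0 = 0" "max (2 * pi / 3 - y) (0 :: real) = 0"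
    using assms by simp_all
  ultimately show ?thesis
    unfolding ramp_combination_def by (smt (verit))
qed

lemma ramp_moment_combination_nonneg:
  fixes c s t :: real
  assumes "0 \<le> c" "0 \<le> s" "0 \<le> t" "s + t \<le> pi"
  defines "S \<equiv> angle_dispersion (2 * pi - (s + t)) s t"
  shows "0 \<le> (2 * pi * S - 2 * (pi - (s + t))) * integral {0..pi} (\<lambda>u. exp (c * cos u))
      - 26 * S / (9 * pi) * integral {0..pi} (\<lambda>u. exp (c * cos u) * cos u)
      + 3 * ramp_moment c (2 * pi / 3) - ramp_moment c (s + t) - ramp_moment c s - ramp_moment c t"
proof -
  define B where "B = 2 * pi * S - 2 * (pi - (s + t))"
  define k where "k = 26 * S / (9 * pi)"
  have "0 \<le> S" by (simp add: S_def angle_dispersion_def)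
  have "S \<le> 2/3" unfolding S_def using assms by (intro angle_dispersion_le) auto
  have "0 \<le> k" "k \<le> 1"
    using \<open>0 \<le> S\<close> \<open>S \<le> 2/3\<close> pi_gt3 by (simp_all add: k_def field_simps)
  have "9 \<le> pi * pi"
    using mult_mono[of 3 pi 3 pi] pi_gt3 by simp
  then have "26 * S / (9 * pi) \<le> 18 * (pi * pi) * S / (9 * pi)"
    using \<open>0 \<le> S\<close> by (intro divide_right_mono mult_right_mono) auto
  then have "k \<le> B + 2 * pi - 2 * (s + t)"
    by (simp add: k_def B_def algebra_simps)
  note k = \<open>0 \<le> k\<close> \<open>k \<le> 1\<close> this
  have "0 \<le> integral {0..pi} (\<lambda>u. ramp_combination B k s t u * exp (c * cos u))"
  proof (rule integral_mult_exp_cos_nonneg[OF \<open>0 \<le> c\<close> continuous_on_ramp_combination])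
    show "0 \<le> min s t" "min s t \<le> 2 * pi / 3" "2 * pi / 3 \<le> pi"
      using assms by auto
    show "integral {0..pi} (ramp_combination B k s t) = 0"
      using assms by (simp add: integral_ramp_combination B_def S_def angle_dispersion_def
          field_simps power2_eq_square)
    show "0 \<le> integral {0..pi} (\<lambda>x. ramp_combination B k s t x * cos x)"
      using angle_dispersion_le_cos_sum[of s t] assms
      by (simp add: integral_ramp_combination_cos k_def S_def)
    show "0 \<le> ramp_combination B k s t x" if "0 \<le> x" "x \<le> min s t" for x
      using that assms pi_gt_zero by (intro ramp_combination_nonneg k) auto
  qed (use k in \<open>auto intro: ramp_combination_antimono ramp_combination_mono\<close>)
  then show ?thesis
    by (simp add: integral_ramp_combination_exp_cos B_def k_def)
qed

theorem lemma4p1: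
  fixes c \<theta>1 \<theta>2 \<theta>3 :: real
  assumes "c > 0"
    and "\<theta>1 \<ge> 0" and "\<theta>2 \<ge> 0" and "\<theta>3 \<ge> 0"
    and "\<theta>1 + \<theta>2 + \<theta>3 = 2 * pi"
    and "\<theta>1 \<ge> pi"
  shows "- 3 * Fc c (2 * pi / 3) + (Fc c \<theta>1 + Fc c \<theta>2 + Fc c \<theta>3)
    \<le> - (1 / pi\<^sup>2) * (13 / 9) * (besselI 1 c / besselI 0 c) *
      ((\<theta>1 / (2 * pi) - 1/3)\<^sup>2 + (\<theta>2 / (2 * pi) - 1/3)\<^sup>2 + (\<theta>3 / (2 * pi) - 1/3)\<^sup>2)"
proof -
  let ?z = "integral {0..pi} (\<lambda>u. exp (c * cos u))"
  let ?y = "integral {0..pi} (\<lambda>u. exp (c * cos u) * cos u)"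
  let ?M = "ramp_moment c"
  define D where "D = angle_dispersion \<theta>1 \<theta>2 \<theta>3"
  define I where "I = (2 * pi * D - 2 * (pi - (\<theta>2 + \<theta>3))) * ?z - 26 * D / (9 * pi) * ?y
    + 3 * ?M (2 * pi / 3) - ?M (\<theta>2 + \<theta>3) - ?M \<theta>2 - ?M \<theta>3"
  have \<theta>1: "\<theta>1 = 2 * pi - (\<theta>2 + \<theta>3)" and "\<theta>2 + \<theta>3 \<le> pi"
    using assms by linarith+
  have F: "Fc c (2 * pi / 3) = ?M (2 * pi / 3) / (2 * pi * ?z) - (1/3)\<^sup>2"
    "Fc c \<theta>1 = (2 * (\<theta>1 - pi) * ?z + ?M (\<theta>2 + \<theta>3)) / (2 * pi * ?z) - (\<theta>1 / (2 * pi))\<^sup>2"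
    "Fc c \<theta>2 = ?M \<theta>2 / (2 * pi * ?z) - (\<theta>2 / (2 * pi))\<^sup>2"
    "Fc c \<theta>3 = ?M \<theta>3 / (2 * pi * ?z) - (\<theta>3 / (2 * pi))\<^sup>2"
    using assms \<open>\<theta>2 + \<theta>3 \<le> pi\<close>
    by (simp_all add: Fc_eq_ramp_moment Fc_eq_ramp_moment_reflected \<theta>1)
  have "- 3 * Fc c (2 * pi / 3) + (Fc c \<theta>1 + Fc c \<theta>2 + Fc c \<theta>3)
      = - (1 / pi\<^sup>2) * (13 / 9) * (?y / ?z) * D - I / (2 * pi * ?z)"
    unfolding F unfolding D_def I_def angle_dispersion_def \<theta>1
    using integral_exp_cos_pos[of c] by (simp add: field_simps power2_eq_square)
  moreover have "0 \<le> I"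
    using ramp_moment_combination_nonneg[of c \<theta>2 \<theta>3] assms \<open>\<theta>2 + \<theta>3 \<le> pi\<close>
    unfolding I_def D_def \<theta>1 by simp
  ultimately show ?thesis
    using integral_exp_cos_pos[of c] \<open>c > 0\<close>
    by (simp add: besselI_ratio_eq_integral_ratio D_def angle_dispersion_def)
qed

end
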